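(* Let $n\ge2$, $1\le i\le n-1$ and $R>0$. Then $D^n_{i,R}$ is a Banach space with respect to $\|\cdot\|$. In particular, $D^n_{i,R}$ is the completion of $C_c([0,\infty))\cap D^n_{i,R}$ with respect to $\|\cdot\|$.
   Context: $C_b(0,\infty)$ = continuous functions on $(0,\infty)$ with support bounded from above. $D^n_i=\{\zeta\in C_b(0,\infty):\lim_{t\to0}t^{n-i}\zeta(t)=0,\ \lim_{t\to0}\int_t^\infty\zeta(s)s^{n-i-1}ds\text{ exists and is finite}\}$; $D^n_{i,R}=\{\zeta\in D^n_i:\mathrm{supp}\,\zeta\subset(0,R]\}$. Elements of $C_c([0,\infty))$ are regarded as functions on $(0,\infty)$ by restriction. The norm is $\|\zeta\|=\sup_{t>0}\left|(n-i)\int_t^\infty\zeta(s)s^{n-i-1}ds\right|+\sup_{t>0}\left|t^{n-i}\zeta(t)+(n-i)\int_t^\infty\zeta(s)s^{n-i-1}ds\right|$. *)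

theory Defs
  imports "HOL-Analysis.Analysis"
begin

text \<open>Functions on (0,infinity) are represented as functions real => real that vanish
  on (-infinity,0] (extension by zero), so that the norm separates points.\<close>

definition Cb :: "(real \<Rightarrow> real) set" where
  "Cb = {\<zeta>. continuous_on {0<..} \<zeta> \<and> (\<exists>M. \<forall>t>M. \<zeta> t = 0) \<and> (\<forall>t\<le>0. \<zeta> t = 0)}"

definition tailint :: "nat \<Rightarrow> nat \<Rightarrow> (real \<Rightarrow> real) \<Rightarrow> real \<Rightarrow> real" where
  "tailint n i \<zeta> t = integral {t..} (\<lambda>s. \<zeta> s * s ^ (n - i - 1))"

definition Dni :: "nat \<Rightarrow> nat \<Rightarrow> (real \<Rightarrow> real) set" where
  "Dni n i = {\<zeta>\<in>Cb. ((\<lambda>t. t ^ (n - i) * \<zeta> t) \<longlongrightarrow> 0) (at_right 0)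
      \<and> (\<exists>L. (tailint n i \<zeta> \<longlongrightarrow> L) (at_right 0))}"

definition DniR :: "nat \<Rightarrow> nat \<Rightarrow> real \<Rightarrow> (real \<Rightarrow> real) set" where
  "DniR n i R = {\<zeta>\<in>Dni n i. \<forall>t>R. \<zeta> t = 0}"

text \<open>Restrictions to (0,infinity) of functions in C_c([0,infinity)).\<close>
definition Cc0 :: "(real \<Rightarrow> real) set" where
  "Cc0 = {\<zeta>. \<exists>g. continuous_on {0..} g \<and> (\<exists>M. \<forall>t\<ge>M. g t = 0) \<and> (\<forall>t>0. \<zeta> t = g t)}"

definition dnorm :: "nat \<Rightarrow> nat \<Rightarrow> (real \<Rightarrow> real) \<Rightarrow> real" where
  "dnorm n i \<zeta> =
     (SUP t\<in>{0<..}. \<bar>real (n - i) * tailint n i \<zeta> t\<bar>)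
   + (SUP t\<in>{0<..}. \<bar>t ^ (n - i) * \<zeta> t + real (n - i) * tailint n i \<zeta> t\<bar>)"

end

theory Submission
  imports Defs
begin

text \<open>
  Write \<open>m = n - i\<close>, \<open>A \<zeta> t = m * tailint n i \<zeta> t\<close> and \<open>P \<zeta> t = t ^ m * \<zeta> t\<close>
  (\<open>scaled_tail\<close> and \<open>weighted\<close> below). Both are linear in \<open>\<zeta>\<close>, \<open>\<bar>A \<zeta> t\<bar>\<close> and
  \<open>\<bar>P \<zeta> t\<bar>\<close> are at most \<open>dnorm n i \<zeta>\<close>, and conversely
  \<open>dnorm n i \<zeta> \<le> 2 sup \<bar>A \<zeta>\<bar> + sup \<bar>P \<zeta>\<bar>\<close>, suprema over \<open>t > 0\<close>.

  So for a Cauchy sequence \<open>X\<close> both \<open>A X\<^sub>k\<close> and \<open>P X\<^sub>k\<close> converge uniformly on \<open>(0,\<infinity>)\<close>.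
  Dividing the limit of \<open>P X\<^sub>k\<close> by \<open>t ^ m\<close> gives a function \<open>\<zeta>\<close> with \<open>X\<^sub>k \<rightarrow> \<zeta>\<close> uniformly
  on every \<open>[a,\<infinity>)\<close>, \<open>a > 0\<close>; thus \<open>\<zeta>\<close> is continuous, its tail integrals are the limits of
  those of \<open>X\<^sub>k\<close>, and the limits at \<open>0\<^sup>+\<close> demanded by \<open>Dni\<close> survive the uniform limit.

  For density, replace \<open>\<zeta>\<close> on \<open>(0,\<delta>]\<close> by the constant \<open>\<zeta> \<delta>\<close>. This function is in
  \<open>C\<^sub>c([0,\<infinity>))\<close>, and on \<open>(0,\<delta>]\<close> the terms of the difference are controlled by the oscillation of
  the tail integral and by \<open>t ^ m * \<zeta> t\<close>, both small near \<open>0\<close>.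
\<close>

section \<open>Suprema and uniform limits on the positive half-line\<close>

definition sup_pos :: "(real \<Rightarrow> real) \<Rightarrow> real" where
  "sup_pos g = (SUP t\<in>{0<..}. \<bar>g t\<bar>)"

lemma sup_pos_upper:
  assumes "bounded (g ` {0<..})" and "0 < t"
  shows "\<bar>g t\<bar> \<le> sup_pos g"
proof -
  obtain B where "\<forall>s>0. \<bar>g s\<bar> \<le> B" using assms(1) by (auto simp: bounded_iff)
  then have "bdd_above ((\<lambda>s. \<bar>g s\<bar>) ` {0<..})" by (intro bdd_aboveI2) auto
  then show ?thesis unfolding sup_pos_def using assms(2) by (auto intro: cSUP_upper)
qed

lemma sup_pos_least:
  assumes "\<And>t. 0 < t \<Longrightarrow> \<bar>g t\<bar> \<le> B"
  shows "sup_pos g \<le> B"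
  unfolding sup_pos_def by (rule cSUP_least) (use assms in auto)

lemma sup_pos_nonneg: "bounded (g ` {0<..}) \<Longrightarrow> 0 \<le> sup_pos g"
  using sup_pos_upper[of g 1] by fastforce

lemma sup_pos_cong: "(\<And>t. 0 < t \<Longrightarrow> f t = g t) \<Longrightarrow> sup_pos f = sup_pos g"
  unfolding sup_pos_def by (intro SUP_cong) auto

lemma sup_pos_add_le:
  assumes "bounded (f ` {0<..})" and "bounded (g ` {0<..})"
  shows "sup_pos (\<lambda>t. f t + g t) \<le> sup_pos f + sup_pos g"
proof (rule sup_pos_least)
  fix t :: real assume "0 < t"
  then show "\<bar>f t + g t\<bar> \<le> sup_pos f + sup_pos g"
    using sup_pos_upper[OF assms(1)] sup_pos_upper[OF assms(2)] abs_triangle_ineq[of "f t" "g t"]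
    by fastforce
qed

lemma sup_pos_scale:
  assumes g: "bounded (g ` {0<..})"
  shows "sup_pos (\<lambda>t. c * g t) = \<bar>c\<bar> * sup_pos g"
proof (cases "c = 0")
  case True
  then show ?thesis by (simp add: sup_pos_def)
next
  case False
  have le: "sup_pos (\<lambda>t. a * h t) \<le> \<bar>a\<bar> * sup_pos h" if "bounded (h ` {0<..})" for a h
    using sup_pos_upper[OF that] by (intro sup_pos_least) (simp add: abs_mult mult_left_mono)
  have "bounded ((\<lambda>t. c * g t) ` {0<..})"
    using bounded_scaleR_comp[OF g, of c] by simp
  from le[OF this, of "1 / c"] have "sup_pos g \<le> \<bar>1 / c\<bar> * sup_pos (\<lambda>t. c * g t)"
    using False by simp
  then have "\<bar>c\<bar> * sup_pos g \<le> sup_pos (\<lambda>t. c * g t)"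
    using False by (simp add: field_simps)
  with le[OF g, of c] show ?thesis by linarith
qed

lemma sup_pos_diff_tendsto_0:
  assumes "uniform_limit {0<..} f g sequentially"
  shows "(\<lambda>k. sup_pos (\<lambda>t. f k t - g t)) \<longlonglongrightarrow> 0"
proof (rule LIMSEQ_I)
  fix e :: real assume "0 < e"
  then have "\<forall>\<^sub>F k in sequentially. \<forall>t\<in>{0<..}. dist (f k t) (g t) < e / 2"
    using assms by (intro uniform_limitD) auto
  then obtain N where N: "\<And>k t. N \<le> k \<Longrightarrow> 0 < t \<Longrightarrow> \<bar>f k t - g t\<bar> < e / 2"
    by (auto simp: eventually_sequentially dist_real_def)
  have "\<bar>sup_pos (\<lambda>t. f k t - g t)\<bar> < e" if "N \<le> k" for k
  proof -
    have "bounded ((\<lambda>t. f k t - g t) ` {0<..})"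
      using N[OF that] by (auto simp: bounded_iff intro!: exI[of _ "e / 2"] less_imp_le)
    then have "0 \<le> sup_pos (\<lambda>t. f k t - g t)" by (rule sup_pos_nonneg)
    moreover have "sup_pos (\<lambda>t. f k t - g t) \<le> e / 2"
      using N[OF that] by (intro sup_pos_least less_imp_le)
    ultimately show ?thesis using \<open>0 < e\<close> by linarith
  qed
  then show "\<exists>N. \<forall>k\<ge>N. norm (sup_pos (\<lambda>t. f k t - g t) - 0) < e" by auto
qed

lemma bounded_image_pos:
  fixes g :: "real \<Rightarrow> real"
  assumes lim: "(g \<longlongrightarrow> L) (at_right 0)"
    and cont: "\<And>d. 0 < d \<Longrightarrow> continuous_on {d..R} g" and vanish: "\<forall>t>R. g t = 0"
  shows "bounded (g ` {0<..})"
proof -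
  have "\<forall>\<^sub>F t in at_right 0. dist (g t) L < 1" using lim by (rule tendstoD) simp
  then obtain d where "0 < d" and near0: "\<And>t. 0 < t \<Longrightarrow> t < d \<Longrightarrow> dist (g t) L < 1"
    by (auto simp: eventually_at_right_field)
  have "bounded (g ` {0<..<d})"
    unfolding bounded_iff
    by (intro exI[of _ "\<bar>L\<bar> + 1"]) (force dest: near0 simp: dist_real_def)
  moreover have "bounded (g ` {d..R})"
    by (intro compact_imp_bounded compact_continuous_image cont \<open>0 < d\<close>) simp
  ultimately have "bounded (g ` {0<..<d} \<union> g ` {d..R} \<union> {0})" by simp
  moreover have "g ` {0<..} \<subseteq> g ` {0<..<d} \<union> g ` {d..R} \<union> {0}"
    using vanish by force
  ultimately show ?thesis by (rule bounded_subset)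
qed

lemma ex_tendsto_uniform_limit:
  fixes f :: "nat \<Rightarrow> 'a \<Rightarrow> 'b::banach"
  assumes lim: "\<And>k. (f k \<longlongrightarrow> c k) F" and unif: "uniform_limit S f g sequentially"
    and ev: "\<forall>\<^sub>F x in F. x \<in> S" and "F \<noteq> bot"
  shows "\<exists>l. (g \<longlongrightarrow> l) F"
proof -
  have "uniformly_Cauchy_on S f"
    using unif by (intro uniformly_convergent_Cauchy uniformly_convergentI)
  have "Cauchy c"
  proof (rule CauchyI)
    fix e :: real assume "0 < e"
    then obtain M where M: "\<And>x m k. x \<in> S \<Longrightarrow> M \<le> m \<Longrightarrow> M \<le> k \<Longrightarrow> dist (f m x) (f k x) < e / 2"
      using \<open>uniformly_Cauchy_on S f\<close> unfolding uniformly_Cauchy_on_def by (meson half_gt_zero)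
    have "norm (c m - c k) < e" if "M \<le> m" "M \<le> k" for m k
    proof -
      have "((\<lambda>x. dist (f m x) (f k x)) \<longlongrightarrow> dist (c m) (c k)) F"
        by (intro tendsto_dist lim)
      moreover have "\<forall>\<^sub>F x in F. dist (f m x) (f k x) \<le> e / 2"
        using ev by eventually_elim (use M that in \<open>auto intro: less_imp_le\<close>)
      ultimately have "dist (c m) (c k) \<le> e / 2"
        using \<open>F \<noteq> bot\<close> by (rule tendsto_upperbound)
      then show ?thesis using \<open>0 < e\<close> by (simp add: dist_norm)
    qed
    then show "\<exists>M. \<forall>m\<ge>M. \<forall>k\<ge>M. norm (c m - c k) < e" by blast
  qed
  then obtain l where "c \<longlonglongrightarrow> l" by (auto simp: Cauchy_convergent_iff convergent_def)
  then have "(g \<longlongrightarrow> l) F"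
    by (rule swap_uniform_limit'[OF always_eventually[OF allI[OF lim]] _ unif ev]) simp
  then show ?thesis ..
qed

lemma continuous_on_pos_uniform_limit:
  assumes cont: "\<And>k. continuous_on {0<..} (f k)"
    and unif: "\<And>a. 0 < a \<Longrightarrow> uniform_limit {a..} f g sequentially"
  shows "continuous_on {0<..} (g :: real \<Rightarrow> real)"
proof -
  have "isCont g x" if "0 < x" for x
  proof -
    have "uniform_limit {x / 2..} f g sequentially" using unif that by simp
    then have unif_x: "uniform_limit {x / 2<..} f g sequentially" by (rule uniform_limit_on_subset) auto
    have "\<forall>\<^sub>F k in sequentially. continuous_on {x / 2<..} (f k)"
      using cont that by (intro always_eventually allI continuous_on_subset[OF cont]) auto
    then have "continuous_on {x / 2<..} g"
      by (rule uniform_limit_theorem[OF _ unif_x]) simp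
    moreover have "x \<in> interior {x / 2<..}"
      using that by (simp add: interior_open)
    ultimately show ?thesis by (rule continuous_on_interior)
  qed
  then show ?thesis by (simp add: continuous_at_imp_continuous_on)
qed

section \<open>Tail integrals\<close>

lemma Cb_add:
  assumes "f \<in> Cb" "g \<in> Cb"
  shows "(\<lambda>t. f t + g t) \<in> Cb"
proof -
  obtain M N where "\<forall>t>M. f t = 0" "\<forall>t>N. g t = 0" using assms by (auto simp: Cb_def)
  then have "\<forall>t>max M N. f t + g t = 0" by simp
  then have "\<exists>K. \<forall>t>K. f t + g t = 0" by blast
  moreover have "continuous_on {0<..} (\<lambda>t. f t + g t)"
    using assms by (simp add: Cb_def continuous_on_add)
  ultimately show ?thesis using assms by (simp add: Cb_def)
qed

lemma Cb_scale: "f \<in> Cb \<Longrightarrow> (\<lambda>t. c * f t) \<in> Cb"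
  unfolding Cb_def by (auto intro: continuous_on_mult_left)

lemma continuous_on_Cb_weighted:
  assumes "f \<in> Cb" and "0 < a"
  shows "continuous_on {a..b} (\<lambda>s. f s * s ^ k)"
proof -
  have "continuous_on {0<..} f" using assms(1) by (simp add: Cb_def)
  then have "continuous_on {a..b} f" by (rule continuous_on_subset) (use assms(2) in auto)
  then show ?thesis by (intro continuous_intros)
qed

lemma has_integral_tail:
  assumes f: "f \<in> Cb" and vanish: "\<forall>s>b. f s = 0" and t: "0 < t" "t \<le> b"
  shows "((\<lambda>s. f s * s ^ k) has_integral integral {t..b} (\<lambda>s. f s * s ^ k)) {t..}"
proof -
  have "((\<lambda>s. f s * s ^ k) has_integral integral {t..b} (\<lambda>s. f s * s ^ k)) {t..b}"
    using continuous_on_Cb_weighted[OF f t(1)] integrable_continuous_real by blast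
  then have "((\<lambda>s. if s \<in> {t..b} then f s * s ^ k else 0) has_integral integral {t..b} (\<lambda>s. f s * s ^ k)) UNIV"
    by (simp only: has_integral_restrict_UNIV)
  moreover have "(\<lambda>s. if s \<in> {t..b} then f s * s ^ k else 0) = (\<lambda>s. if s \<in> {t..} then f s * s ^ k else 0)"
    using vanish by (auto intro!: ext)
  ultimately show ?thesis
    by (simp only: has_integral_restrict_UNIV)
qed

lemma tailint_eq_integral:
  assumes "f \<in> Cb" and "\<forall>s>b. f s = 0" and "0 < t" "t \<le> b"
  shows "tailint n i f t = integral {t..b} (\<lambda>s. f s * s ^ (n - i - 1))"
  unfolding tailint_def using has_integral_tail[OF assms] by (rule integral_unique)

lemma integrable_tail:
  assumes f: "f \<in> Cb" and "0 < t"
  shows "(\<lambda>s. f s * s ^ k) integrable_on {t..}"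
proof -
  obtain M where "\<forall>s>M. f s = 0" using f by (auto simp: Cb_def)
  then have "\<forall>s>max t M. f s = 0" by simp
  from has_integral_tail[OF f this \<open>0 < t\<close>] show ?thesis
    by (rule has_integral_integrable) simp
qed

lemma tailint_add:
  assumes "f \<in> Cb" "g \<in> Cb" "0 < t"
  shows "tailint n i (\<lambda>s. f s + g s) t = tailint n i f t + tailint n i g t"
  unfolding tailint_def
  using integral_add[OF integrable_tail[OF assms(1,3)] integrable_tail[OF assms(2,3)]]
  by (simp add: distrib_right)

lemma tailint_diff:
  assumes "f \<in> Cb" "g \<in> Cb" "0 < t"
  shows "tailint n i (\<lambda>s. f s - g s) t = tailint n i f t - tailint n i g t"
  unfolding tailint_def
  using integral_diff[OF integrable_tail[OF assms(1,3)] integrable_tail[OF assms(2,3)]]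
  by (simp add: left_diff_distrib)

lemma tailint_scale: "tailint n i (\<lambda>s. c * f s) t = c * tailint n i f t"
  unfolding tailint_def by (simp add: mult.assoc)

lemma tailint_eq_0:
  assumes "\<And>s. t \<le> s \<Longrightarrow> f s = 0"
  shows "tailint n i f t = 0"
proof -
  have "tailint n i f t = integral {t..} (\<lambda>s. 0)"
    unfolding tailint_def by (rule integral_cong) (simp add: assms)
  then show ?thesis by simp
qed

lemma tailint_split:
  assumes f: "f \<in> Cb" and t: "0 < t" "t \<le> d"
  shows "tailint n i f t = integral {t..d} (\<lambda>s. f s * s ^ (n - i - 1)) + tailint n i f d"
proof -
  obtain M where M: "\<forall>s>M. f s = 0" using f by (auto simp: Cb_def)
  define b where "b = max d M"
  have vanish: "\<forall>s>b. f s = 0" and "d \<le> b" using M by (auto simp: b_def)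
  have "(\<lambda>s. f s * s ^ (n - i - 1)) integrable_on {t..b}"
    using continuous_on_Cb_weighted[OF f t(1)] by (rule integrable_continuous_real)
  then show ?thesis
    using tailint_eq_integral[OF f vanish] t \<open>d \<le> b\<close>
    by (simp add: Henstock_Kurzweil_Integration.integral_combine)
qed

lemma continuous_on_tailint:
  assumes f: "f \<in> Cb" and vanish: "\<forall>s>R. f s = 0" and "0 < d"
  shows "continuous_on {d..R} (tailint n i f)"
proof -
  have "(\<lambda>s. f s * s ^ (n - i - 1)) integrable_on {d..R}"
    using continuous_on_Cb_weighted[OF f \<open>0 < d\<close>] by (rule integrable_continuous_real)
  then have "continuous_on {d..R} (\<lambda>t. integral {t..R} (\<lambda>s. f s * s ^ (n - i - 1)))"
    by (rule indefinite_integral_continuous_1')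
  then show ?thesis
    by (rule continuous_on_eq) (use tailint_eq_integral[OF f vanish] \<open>0 < d\<close> in auto)
qed

lemma tailint_tendsto_uniform_limit:
  assumes f: "\<And>k. f k \<in> Cb" "\<And>k. \<forall>s>R. f k s = 0" and g: "g \<in> Cb" "\<forall>s>R. g s = 0"
    and "0 < t" and unif: "uniform_limit {t..} f g sequentially"
  shows "(\<lambda>k. tailint n i (f k) t) \<longlonglongrightarrow> tailint n i g t"
proof -
  define b where "b = max t R"
  have "t \<le> b" and fb: "\<And>k. \<forall>s>b. f k s = 0" and gb: "\<forall>s>b. g s = 0"
    using f(2) g(2) by (auto simp: b_def)
  have "bounded (g ` {t..b})"
    using continuous_on_Cb_weighted[OF g(1) \<open>0 < t\<close>, of b 0]
    by (intro compact_imp_bounded compact_continuous_image) auto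
  moreover have "bounded ((\<lambda>s. s ^ (n - i - 1)) ` {t..b})"
    by (intro compact_imp_bounded compact_continuous_image continuous_intros) simp
  moreover have "uniform_limit {t..b} f g sequentially"
    using unif by (rule uniform_limit_on_subset) auto
  ultimately have "uniform_limit {t..b} (\<lambda>k s. f k s * s ^ (n - i - 1)) (\<lambda>s. g s * s ^ (n - i - 1)) sequentially"
    by (intro uniform_lim_mult uniform_limit_const)
  then obtain I J where I: "\<And>k. ((\<lambda>s. f k s * s ^ (n - i - 1)) has_integral I k) {t..b}"
    and J: "((\<lambda>s. g s * s ^ (n - i - 1)) has_integral J) {t..b}" and "I \<longlonglongrightarrow> J"
    by (rule uniform_limit_integral[OF _ continuous_on_Cb_weighted[OF f(1) \<open>0 < t\<close>]]) auto
  moreover have "tailint n i (f k) t = I k" for k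
    using tailint_eq_integral[OF f(1) fb \<open>0 < t\<close> \<open>t \<le> b\<close>] I[of k] by (simp add: integral_unique)
  moreover have "tailint n i g t = J"
    using tailint_eq_integral[OF g(1) gb \<open>0 < t\<close> \<open>t \<le> b\<close>] J by (simp add: integral_unique)
  ultimately show ?thesis by simp
qed

section \<open>The space and its norm\<close>

lemma DniR_Cb: "\<zeta> \<in> DniR n i R \<Longrightarrow> \<zeta> \<in> Cb"
  by (simp add: DniR_def Dni_def)

lemma DniR_vanish: "\<zeta> \<in> DniR n i R \<Longrightarrow> \<forall>t>R. \<zeta> t = 0"
  by (simp add: DniR_def)

lemma DniR_zero: "(\<lambda>t. 0) \<in> DniR n i R"
proof -
  have "tailint n i (\<lambda>t. 0) = (\<lambda>t. 0)" by (rule ext) (rule tailint_eq_0, simp)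
  then show ?thesis by (auto simp: DniR_def Dni_def Cb_def)
qed

lemma DniR_add:
  assumes f: "f \<in> DniR n i R" and g: "g \<in> DniR n i R"
  shows "(\<lambda>t. f t + g t) \<in> DniR n i R"
proof -
  obtain L1 L2 where "(tailint n i f \<longlongrightarrow> L1) (at_right 0)" "(tailint n i g \<longlongrightarrow> L2) (at_right 0)"
    using f g by (auto simp: DniR_def Dni_def)
  then have "((\<lambda>t. tailint n i f t + tailint n i g t) \<longlongrightarrow> L1 + L2) (at_right 0)"
    by (rule tendsto_add)
  moreover have "\<forall>\<^sub>F t in at_right 0. tailint n i f t + tailint n i g t = tailint n i (\<lambda>s. f s + g s) t"
    using eventually_at_right_less[of "0::real"]
    by eventually_elim (simp add: tailint_add[OF DniR_Cb[OF f] DniR_Cb[OF g]])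
  ultimately have "(tailint n i (\<lambda>s. f s + g s) \<longlongrightarrow> L1 + L2) (at_right 0)"
    by (rule Lim_transform_eventually)
  moreover have "((\<lambda>t. t ^ (n - i) * f t + t ^ (n - i) * g t) \<longlongrightarrow> 0 + 0) (at_right 0)"
    using f g by (intro tendsto_add) (auto simp: DniR_def Dni_def)
  ultimately show ?thesis
    using f g Cb_add[OF DniR_Cb[OF f] DniR_Cb[OF g]] by (auto simp: DniR_def Dni_def distrib_left)
qed

lemma DniR_scale:
  assumes f: "f \<in> DniR n i R"
  shows "(\<lambda>t. c * f t) \<in> DniR n i R"
proof -
  obtain L where "(tailint n i f \<longlongrightarrow> L) (at_right 0)" using f by (auto simp: DniR_def Dni_def)
  then have "((\<lambda>t. c * tailint n i f t) \<longlongrightarrow> c * L) (at_right 0)"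
    by (rule tendsto_mult_left)
  moreover have "tailint n i (\<lambda>s. c * f s) = (\<lambda>t. c * tailint n i f t)"
    by (rule ext) (rule tailint_scale)
  ultimately have "(tailint n i (\<lambda>s. c * f s) \<longlongrightarrow> c * L) (at_right 0)"
    by simp
  moreover have "((\<lambda>t. c * (t ^ (n - i) * f t)) \<longlongrightarrow> c * 0) (at_right 0)"
    using f by (intro tendsto_mult_left) (auto simp: DniR_def Dni_def)
  ultimately show ?thesis
    using f Cb_scale[OF DniR_Cb[OF f]] by (auto simp: DniR_def Dni_def mult.left_commute)
qed

lemma DniR_diff: "f \<in> DniR n i R \<Longrightarrow> g \<in> DniR n i R \<Longrightarrow> (\<lambda>t. f t - g t) \<in> DniR n i R"
  using DniR_add[OF _ DniR_scale[of g n i R "-1"], of f] by simp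

abbreviation scaled_tail :: "nat \<Rightarrow> nat \<Rightarrow> (real \<Rightarrow> real) \<Rightarrow> real \<Rightarrow> real" where
  "scaled_tail n i \<zeta> t \<equiv> real (n - i) * tailint n i \<zeta> t"

abbreviation weighted :: "nat \<Rightarrow> nat \<Rightarrow> (real \<Rightarrow> real) \<Rightarrow> real \<Rightarrow> real" where
  "weighted n i \<zeta> t \<equiv> t ^ (n - i) * \<zeta> t"

lemma weighted_diff: "weighted n i (\<lambda>t. f t - g t) t = weighted n i f t - weighted n i g t"
  by (simp add: right_diff_distrib)

lemma scaled_tail_diff:
  "f \<in> Cb \<Longrightarrow> g \<in> Cb \<Longrightarrow> 0 < t
    \<Longrightarrow> scaled_tail n i (\<lambda>t. f t - g t) t = scaled_tail n i f t - scaled_tail n i g t"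
  by (simp add: tailint_diff right_diff_distrib)

lemma bounded_scaled_tail:
  assumes \<zeta>: "\<zeta> \<in> DniR n i R"
  shows "bounded (scaled_tail n i \<zeta> ` {0<..})"
proof -
  obtain L where lim: "(tailint n i \<zeta> \<longlongrightarrow> L) (at_right 0)" using \<zeta> by (auto simp: DniR_def Dni_def)
  have cont: "\<And>d. 0 < d \<Longrightarrow> continuous_on {d..R} (tailint n i \<zeta>)"
    using continuous_on_tailint[OF DniR_Cb[OF \<zeta>] DniR_vanish[OF \<zeta>]] .
  have "\<forall>t>R. tailint n i \<zeta> t = 0"
    using DniR_vanish[OF \<zeta>] by (auto intro: tailint_eq_0)
  with lim cont have "bounded (tailint n i \<zeta> ` {0<..})"
    by (rule bounded_image_pos)
  then show ?thesis using bounded_scaleR_comp by force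
qed

lemma bounded_weighted:
  assumes \<zeta>: "\<zeta> \<in> DniR n i R"
  shows "bounded (weighted n i \<zeta> ` {0<..})"
proof (rule bounded_image_pos)
  show "(weighted n i \<zeta> \<longlongrightarrow> 0) (at_right 0)" using \<zeta> by (simp add: DniR_def Dni_def)
  show "\<forall>t>R. weighted n i \<zeta> t = 0" using DniR_vanish[OF \<zeta>] by simp
  fix d :: real assume "0 < d"
  have "continuous_on {0<..} \<zeta>" using DniR_Cb[OF \<zeta>] by (simp add: Cb_def)
  then have "continuous_on {d..R} \<zeta>" by (rule continuous_on_subset) (use \<open>0 < d\<close> in auto)
  then show "continuous_on {d..R} (weighted n i \<zeta>)" by (intro continuous_intros)
qed

lemma bounded_weighted_plus_scaled_tail:
  "\<zeta> \<in> DniR n i R \<Longrightarrow> bounded ((\<lambda>t. weighted n i \<zeta> t + scaled_tail n i \<zeta> t) ` {0<..})"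
  by (intro bounded_plus_comp bounded_weighted bounded_scaled_tail)

lemma dnorm_eq: "dnorm n i \<zeta> = sup_pos (scaled_tail n i \<zeta>) + sup_pos (\<lambda>t. weighted n i \<zeta> t + scaled_tail n i \<zeta> t)"
  by (simp add: dnorm_def sup_pos_def)

lemma dnorm_nonneg: "\<zeta> \<in> DniR n i R \<Longrightarrow> 0 \<le> dnorm n i \<zeta>"
  unfolding dnorm_eq
  by (intro add_nonneg_nonneg sup_pos_nonneg bounded_scaled_tail bounded_weighted_plus_scaled_tail)

lemma abs_scaled_tail_le_dnorm:
  assumes "\<zeta> \<in> DniR n i R" and "0 < t"
  shows "\<bar>scaled_tail n i \<zeta> t\<bar> \<le> dnorm n i \<zeta>"
  using sup_pos_upper[OF bounded_scaled_tail[OF assms(1)] assms(2)]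
    sup_pos_nonneg[OF bounded_weighted_plus_scaled_tail[OF assms(1)]]
  unfolding dnorm_eq by linarith

lemma abs_weighted_le_dnorm:
  assumes "\<zeta> \<in> DniR n i R" and "0 < t"
  shows "\<bar>weighted n i \<zeta> t\<bar> \<le> dnorm n i \<zeta>"
  using sup_pos_upper[OF bounded_scaled_tail[OF assms(1)] assms(2)]
    sup_pos_upper[OF bounded_weighted_plus_scaled_tail[OF assms(1)] assms(2)]
  unfolding dnorm_eq by linarith

lemma dnorm_le:
  assumes \<zeta>: "\<zeta> \<in> DniR n i R"
  shows "dnorm n i \<zeta> \<le> 2 * sup_pos (scaled_tail n i \<zeta>) + sup_pos (weighted n i \<zeta>)"
  using sup_pos_add_le[OF bounded_weighted[OF \<zeta>] bounded_scaled_tail[OF \<zeta>]]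
  unfolding dnorm_eq by linarith

lemma dnorm_eq_0_iff:
  assumes \<zeta>: "\<zeta> \<in> DniR n i R"
  shows "dnorm n i \<zeta> = 0 \<longleftrightarrow> \<zeta> = (\<lambda>t. 0)"
proof
  assume "dnorm n i \<zeta> = 0"
  then have "weighted n i \<zeta> t = 0" if "0 < t" for t
    using abs_weighted_le_dnorm[OF \<zeta> that] by simp
  moreover have "\<zeta> t = 0" if "t \<le> 0" for t
    using DniR_Cb[OF \<zeta>] that by (simp add: Cb_def)
  ultimately show "\<zeta> = (\<lambda>t. 0)"
    by (force simp: not_le)
next
  assume "\<zeta> = (\<lambda>t. 0)"
  then show "dnorm n i \<zeta> = 0" by (simp add: dnorm_def tailint_def)
qed

lemma dnorm_scale:
  assumes \<zeta>: "\<zeta> \<in> DniR n i R"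
  shows "dnorm n i (\<lambda>t. c * \<zeta> t) = \<bar>c\<bar> * dnorm n i \<zeta>"
proof -
  have tail: "scaled_tail n i (\<lambda>t. c * \<zeta> t) = (\<lambda>t. c * scaled_tail n i \<zeta> t)"
    by (simp add: tailint_scale mult.left_commute)
  have sum: "(\<lambda>t. weighted n i (\<lambda>t. c * \<zeta> t) t + scaled_tail n i (\<lambda>t. c * \<zeta> t) t)
      = (\<lambda>t. c * (weighted n i \<zeta> t + scaled_tail n i \<zeta> t))"
    by (simp add: tailint_scale algebra_simps)
  show ?thesis
    unfolding dnorm_eq tail sum sup_pos_scale[OF bounded_scaled_tail[OF \<zeta>]]
      sup_pos_scale[OF bounded_weighted_plus_scaled_tail[OF \<zeta>]]
    by (rule distrib_left[symmetric])
qed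

lemma dnorm_triangle:
  assumes f: "f \<in> DniR n i R" and g: "g \<in> DniR n i R"
  shows "dnorm n i (\<lambda>t. f t + g t) \<le> dnorm n i f + dnorm n i g"
proof -
  have add: "tailint n i (\<lambda>s. f s + g s) t = tailint n i f t + tailint n i g t" if "0 < t" for t
    using tailint_add[OF DniR_Cb[OF f] DniR_Cb[OF g] that] .
  have "sup_pos (scaled_tail n i (\<lambda>t. f t + g t))
      = sup_pos (\<lambda>t. scaled_tail n i f t + scaled_tail n i g t)"
    by (rule sup_pos_cong) (simp add: add distrib_left)
  also have "\<dots> \<le> sup_pos (scaled_tail n i f) + sup_pos (scaled_tail n i g)"
    by (rule sup_pos_add_le[OF bounded_scaled_tail[OF f] bounded_scaled_tail[OF g]])
  finally have tail: "sup_pos (scaled_tail n i (\<lambda>t. f t + g t))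
      \<le> sup_pos (scaled_tail n i f) + sup_pos (scaled_tail n i g)" .
  have "sup_pos (\<lambda>t. weighted n i (\<lambda>t. f t + g t) t + scaled_tail n i (\<lambda>t. f t + g t) t)
      = sup_pos (\<lambda>t. (weighted n i f t + scaled_tail n i f t) + (weighted n i g t + scaled_tail n i g t))"
    by (rule sup_pos_cong) (simp add: add algebra_simps)
  also have "\<dots> \<le> sup_pos (\<lambda>t. weighted n i f t + scaled_tail n i f t)
      + sup_pos (\<lambda>t. weighted n i g t + scaled_tail n i g t)"
    by (rule sup_pos_add_le[OF bounded_weighted_plus_scaled_tail[OF f] bounded_weighted_plus_scaled_tail[OF g]])
  finally show ?thesis using tail unfolding dnorm_eq by linarith
qed

section \<open>Completeness\<close>

lemma uniformly_Cauchy_of_dnorm_Cauchy: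
  assumes X: "\<And>k. X k \<in> DniR n i R"
    and Cauchy: "\<And>e. 0 < e \<Longrightarrow> \<exists>N. \<forall>a\<ge>N. \<forall>b\<ge>N. dnorm n i (\<lambda>t. X a t - X b t) < e"
  shows "uniformly_Cauchy_on {0<..} (\<lambda>k. weighted n i (X k))"
    and "uniformly_Cauchy_on {0<..} (\<lambda>k. scaled_tail n i (X k))"
proof -
  have close: "dist (weighted n i (X a) t) (weighted n i (X b) t) \<le> dnorm n i (\<lambda>t. X a t - X b t)
      \<and> dist (scaled_tail n i (X a) t) (scaled_tail n i (X b) t) \<le> dnorm n i (\<lambda>t. X a t - X b t)"
    if "0 < t" for a b t
    using abs_weighted_le_dnorm[OF DniR_diff[OF X X] that, of a b]
      abs_scaled_tail_le_dnorm[OF DniR_diff[OF X X] that, of a b]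
    unfolding weighted_diff scaled_tail_diff[OF DniR_Cb[OF X] DniR_Cb[OF X] that] dist_real_def
    by (rule conjI)
  have "\<exists>N. \<forall>t\<in>{0<..}. \<forall>a\<ge>N. \<forall>b\<ge>N.
      dist (weighted n i (X a) t) (weighted n i (X b) t) < e
      \<and> dist (scaled_tail n i (X a) t) (scaled_tail n i (X b) t) < e" if e: "0 < e" for e
  proof -
    obtain N where "\<And>a b. N \<le> a \<Longrightarrow> N \<le> b \<Longrightarrow> dnorm n i (\<lambda>t. X a t - X b t) < e"
      using Cauchy[OF e] by blast
    then show ?thesis using close by (meson greaterThan_iff le_less_trans)
  qed
  then show "uniformly_Cauchy_on {0<..} (\<lambda>k. weighted n i (X k))"
    and "uniformly_Cauchy_on {0<..} (\<lambda>k. scaled_tail n i (X k))"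
    by (auto intro!: uniformly_Cauchy_onI) (metis (full_types))+
qed

lemma uniform_limit_of_weighted:
  assumes X: "\<And>k. X k \<in> DniR n i R"
    and W: "uniform_limit {0<..} (\<lambda>k. weighted n i (X k)) w sequentially" and "0 < a"
  shows "uniform_limit {a..} X (\<lambda>t. w t / t ^ (n - i)) sequentially"
proof -
  have "bounded (w ` {0<..})"
    by (rule uniform_limit_bounded[OF W]) (simp_all add: bounded_weighted[OF X])
  have "uniform_limit {a..} (\<lambda>k t. weighted n i (X k) t / t ^ (n - i)) (\<lambda>t. w t / t ^ (n - i)) sequentially"
  proof (rule uniform_lim_divide[OF _ uniform_limit_const])
    show "uniform_limit {a..} (\<lambda>k. weighted n i (X k)) w sequentially"
      using W by (rule uniform_limit_on_subset) (use \<open>0 < a\<close> in auto)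
    show "bounded (w ` {a..})"
      using \<open>bounded (w ` {0<..})\<close> by (rule bounded_subset) (use \<open>0 < a\<close> in auto)
    show "a ^ (n - i) \<le> norm (t ^ (n - i))" if "t \<in> {a..}" for t
      using that \<open>0 < a\<close> by (simp add: power_mono)
  qed (use \<open>0 < a\<close> in simp)
  moreover have "uniform_limit {a..} (\<lambda>k t. weighted n i (X k) t / t ^ (n - i)) (\<lambda>t. w t / t ^ (n - i)) sequentially
      \<longleftrightarrow> uniform_limit {a..} X (\<lambda>t. w t / t ^ (n - i)) sequentially"
    by (rule uniform_limit_cong') (use \<open>0 < a\<close> in simp_all)
  ultimately show ?thesis by simp
qed

lemma Cb_uniform_limit:
  assumes X: "\<And>k. X k \<in> DniR n i R" and unif: "\<And>a. 0 < a \<Longrightarrow> uniform_limit {a..} X \<zeta> sequentially"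
    and zero: "\<forall>t\<le>0. \<zeta> t = 0"
  shows "\<zeta> \<in> Cb" and "\<forall>t>R. \<zeta> t = 0"
proof -
  show vanish: "\<forall>t>R. \<zeta> t = 0"
  proof (intro allI impI)
    fix t assume "R < t"
    show "\<zeta> t = 0"
    proof (cases "0 < t")
      case True
      then have "(\<lambda>k. X k t) \<longlonglongrightarrow> \<zeta> t"
        using tendsto_uniform_limitI[OF unif[OF True]] by simp
      moreover have "(\<lambda>k. X k t) = (\<lambda>k. 0)"
        using DniR_vanish[OF X] \<open>R < t\<close> by simp
      ultimately show ?thesis by (simp add: LIMSEQ_const_iff)
    qed (use zero in simp)
  qed
  have "continuous_on {0<..} \<zeta>"
  proof (rule continuous_on_pos_uniform_limit[OF _ unif])
    show "continuous_on {0<..} (X k)" for k using DniR_Cb[OF X] by (simp add: Cb_def)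
  qed
  moreover have "\<exists>M. \<forall>t>M. \<zeta> t = 0" using vanish by blast
  ultimately show "\<zeta> \<in> Cb" using zero by (simp add: Cb_def)
qed

lemma DniR_of_uniform_limit:
  assumes "i < n" and X: "\<And>k. X k \<in> DniR n i R" and \<zeta>: "\<zeta> \<in> Cb" "\<forall>t>R. \<zeta> t = 0"
    and W: "uniform_limit {0<..} (\<lambda>k. weighted n i (X k)) (weighted n i \<zeta>) sequentially"
    and T: "uniform_limit {0<..} (\<lambda>k. scaled_tail n i (X k)) (scaled_tail n i \<zeta>) sequentially"
  shows "\<zeta> \<in> DniR n i R"
proof -
  have at_pos: "\<forall>\<^sub>F t in at_right 0. t \<in> {0::real<..}"
    by (simp add: eventually_at_right_less)
  have "(weighted n i \<zeta> \<longlongrightarrow> 0) (at_right 0)"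
    using X by (intro swap_uniform_limit'[OF _ tendsto_const W at_pos]) (simp_all add: DniR_def Dni_def)
  moreover have "\<exists>l. (tailint n i \<zeta> \<longlongrightarrow> l) (at_right 0)"
  proof -
    have "\<forall>k. \<exists>L. (tailint n i (X k) \<longlongrightarrow> L) (at_right 0)"
      using X by (simp add: DniR_def Dni_def)
    then obtain c where "\<And>k. (tailint n i (X k) \<longlongrightarrow> c k) (at_right 0)"
      by metis
    then have "\<And>k. (scaled_tail n i (X k) \<longlongrightarrow> real (n - i) * c k) (at_right 0)"
      by (rule tendsto_mult_left)
    from ex_tendsto_uniform_limit[OF this T at_pos]
    obtain l where "(scaled_tail n i \<zeta> \<longlongrightarrow> l) (at_right 0)" by auto
    then have "((\<lambda>t. scaled_tail n i \<zeta> t / real (n - i)) \<longlongrightarrow> l / real (n - i)) (at_right 0)"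
      using \<open>i < n\<close> by (intro tendsto_divide tendsto_const) simp_all
    then show ?thesis using \<open>i < n\<close> by auto
  qed
  ultimately show ?thesis
    using \<zeta> by (simp add: DniR_def Dni_def)
qed

lemma DniR_closed_under_uniform_limit:
  assumes "i < n" and X: "\<And>k. X k \<in> DniR n i R"
    and W: "uniform_limit {0<..} (\<lambda>k. weighted n i (X k)) w sequentially"
    and T: "uniform_limit {0<..} (\<lambda>k. scaled_tail n i (X k)) T sequentially"
  obtains \<zeta> where "\<zeta> \<in> DniR n i R"
    and "uniform_limit {0<..} (\<lambda>k. weighted n i (X k)) (weighted n i \<zeta>) sequentially"
    and "uniform_limit {0<..} (\<lambda>k. scaled_tail n i (X k)) (scaled_tail n i \<zeta>) sequentially"
proof -
  define \<zeta> where "\<zeta> t = (if 0 < t then w t / t ^ (n - i) else 0)" for t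
  have "uniform_limit {0<..} (\<lambda>k. weighted n i (X k)) w sequentially
      \<longleftrightarrow> uniform_limit {0<..} (\<lambda>k. weighted n i (X k)) (weighted n i \<zeta>) sequentially"
    by (rule uniform_limit_cong') (simp_all add: \<zeta>_def)
  with W have W': "uniform_limit {0<..} (\<lambda>k. weighted n i (X k)) (weighted n i \<zeta>) sequentially"
    by simp
  have X_unif: "uniform_limit {a..} X \<zeta> sequentially" if "0 < a" for a
    using uniform_limit_of_weighted[OF X W that] that
    by (subst uniform_limit_cong'[where h = \<zeta> and i = "\<lambda>t. w t / t ^ (n - i)"]) (simp_all add: \<zeta>_def)
  have zero: "\<forall>t\<le>0. \<zeta> t = 0" by (simp add: \<zeta>_def)
  note \<zeta> = Cb_uniform_limit[OF X X_unif zero]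
  have "T t = scaled_tail n i \<zeta> t" if "0 < t" for t
  proof -
    have "(\<lambda>k. scaled_tail n i (X k) t) \<longlonglongrightarrow> T t"
      using tendsto_uniform_limitI[OF T] that by simp
    moreover have "(\<lambda>k. scaled_tail n i (X k) t) \<longlonglongrightarrow> scaled_tail n i \<zeta> t"
      using tailint_tendsto_uniform_limit[OF DniR_Cb[OF X] DniR_vanish[OF X] \<zeta> that X_unif[OF that]]
      by (rule tendsto_mult_left)
    ultimately show ?thesis by (rule LIMSEQ_unique)
  qed
  then have "uniform_limit {0<..} (\<lambda>k. scaled_tail n i (X k)) T sequentially
      \<longleftrightarrow> uniform_limit {0<..} (\<lambda>k. scaled_tail n i (X k)) (scaled_tail n i \<zeta>) sequentially"
    by (intro uniform_limit_cong') simp_all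
  with T have T': "uniform_limit {0<..} (\<lambda>k. scaled_tail n i (X k)) (scaled_tail n i \<zeta>) sequentially"
    by simp
  show ?thesis
    using DniR_of_uniform_limit[OF \<open>i < n\<close> X \<zeta> W' T'] W' T' by (rule that)
qed

lemma dnorm_tendsto_0_uniform_limit:
  assumes X: "\<And>k. X k \<in> DniR n i R" and \<zeta>: "\<zeta> \<in> DniR n i R"
    and W: "uniform_limit {0<..} (\<lambda>k. weighted n i (X k)) (weighted n i \<zeta>) sequentially"
    and T: "uniform_limit {0<..} (\<lambda>k. scaled_tail n i (X k)) (scaled_tail n i \<zeta>) sequentially"
  shows "(\<lambda>k. dnorm n i (\<lambda>t. X k t - \<zeta> t)) \<longlonglongrightarrow> 0"
proof -
  define B where "B = (\<lambda>k. 2 * sup_pos (\<lambda>t. scaled_tail n i (X k) t - scaled_tail n i \<zeta> t)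
    + sup_pos (\<lambda>t. weighted n i (X k) t - weighted n i \<zeta> t))"
  have "B \<longlonglongrightarrow> 2 * 0 + 0"
    unfolding B_def by (intro tendsto_add tendsto_mult_left sup_pos_diff_tendsto_0 T W)
  then have lim: "B \<longlonglongrightarrow> 0" by simp
  have "dnorm n i (\<lambda>t. X k t - \<zeta> t) \<le> B k" for k
  proof -
    have "sup_pos (scaled_tail n i (\<lambda>t. X k t - \<zeta> t))
        = sup_pos (\<lambda>t. scaled_tail n i (X k) t - scaled_tail n i \<zeta> t)"
      by (rule sup_pos_cong) (rule scaled_tail_diff[OF DniR_Cb[OF X] DniR_Cb[OF \<zeta>]])
    then show ?thesis
      using dnorm_le[OF DniR_diff[OF X \<zeta>], of k] unfolding B_def weighted_diff by simp
  qed
  then have le: "\<forall>\<^sub>F k in sequentially. dnorm n i (\<lambda>t. X k t - \<zeta> t) \<le> B k" by simp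
  have ge: "\<forall>\<^sub>F k in sequentially. 0 \<le> dnorm n i (\<lambda>t. X k t - \<zeta> t)"
    using dnorm_nonneg[OF DniR_diff[OF X \<zeta>]] by simp
  show ?thesis by (rule tendsto_sandwich[OF ge le tendsto_const lim])
qed

lemma DniR_complete:
  assumes "i < n" and X: "\<And>k. X k \<in> DniR n i R"
    and Cauchy: "\<And>e. 0 < e \<Longrightarrow> \<exists>N. \<forall>a\<ge>N. \<forall>b\<ge>N. dnorm n i (\<lambda>t. X a t - X b t) < e"
  shows "\<exists>\<zeta>\<in>DniR n i R. (\<lambda>k. dnorm n i (\<lambda>t. X k t - \<zeta> t)) \<longlonglongrightarrow> 0"
proof -
  obtain w where W: "uniform_limit {0<..} (\<lambda>k. weighted n i (X k)) w sequentially"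
    using Cauchy_uniformly_convergent[OF uniformly_Cauchy_of_dnorm_Cauchy(1)[OF X Cauchy]]
    unfolding uniformly_convergent_on_def by blast
  obtain T where T: "uniform_limit {0<..} (\<lambda>k. scaled_tail n i (X k)) T sequentially"
    using Cauchy_uniformly_convergent[OF uniformly_Cauchy_of_dnorm_Cauchy(2)[OF X Cauchy]]
    unfolding uniformly_convergent_on_def by blast
  obtain \<zeta> where \<zeta>: "\<zeta> \<in> DniR n i R"
    and W\<zeta>: "uniform_limit {0<..} (\<lambda>k. weighted n i (X k)) (weighted n i \<zeta>) sequentially"
    and T\<zeta>: "uniform_limit {0<..} (\<lambda>k. scaled_tail n i (X k)) (scaled_tail n i \<zeta>) sequentially"
    using DniR_closed_under_uniform_limit[OF \<open>i < n\<close> X W T] .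
  show ?thesis using dnorm_tendsto_0_uniform_limit[OF X \<zeta> W\<zeta> T\<zeta>] \<zeta> by blast
qed

section \<open>Density of compactly supported functions\<close>

lemma has_integral_power:
  fixes a b :: real
  assumes "a \<le> b"
  shows "((\<lambda>s. s ^ k) has_integral (b ^ Suc k - a ^ Suc k) / Suc k) {a..b}"
proof -
  have "((\<lambda>s. s ^ k) has_integral (b ^ Suc k / Suc k - a ^ Suc k / Suc k)) {a..b}"
  proof (rule fundamental_theorem_of_calculus[OF assms])
    fix s :: real
    have "((\<lambda>s. s ^ Suc k) has_real_derivative real (Suc k) * s ^ k) (at s within {a..b})"
      using DERIV_pow[of "Suc k" s] by (simp add: has_field_derivative_at_within)
    from DERIV_cdivide[OF this, of "real (Suc k)"]
    have "((\<lambda>s. s ^ Suc k / Suc k) has_real_derivative s ^ k) (at s within {a..b})"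
      by (simp del: of_nat_Suc)
    then show "((\<lambda>s. s ^ Suc k / Suc k) has_vector_derivative s ^ k) (at s within {a..b})"
      by (simp add: has_real_derivative_iff_has_vector_derivative)
  qed
  then show ?thesis by (simp add: diff_divide_distrib)
qed

lemma Cc0_DniR:
  assumes "i < n" and "\<phi> \<in> Cc0" and zero: "\<forall>t\<le>0. \<phi> t = 0" and vanish: "\<forall>t>R. \<phi> t = 0"
  shows "\<phi> \<in> DniR n i R"
proof -
  obtain g where g: "continuous_on {0..} g" and \<phi>g: "\<And>t. 0 < t \<Longrightarrow> \<phi> t = g t"
    using \<open>\<phi> \<in> Cc0\<close> by (auto simp: Cc0_def)
  have "continuous_on {0<..} \<phi>"
    using continuous_on_subset[OF g, of "{0<..}"] by (rule continuous_on_eq) (auto simp: \<phi>g)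
  then have Cb: "\<phi> \<in> Cb" using zero vanish by (auto simp: Cb_def)
  define b where "b = max R 1"
  have "0 < b" and vanish_b: "\<forall>t>b. \<phi> t = 0" using vanish by (auto simp: b_def)
  have g0b: "continuous_on {0..b} g" using g by (rule continuous_on_subset) auto
  define h where "h t = integral {t..b} (\<lambda>s. g s * s ^ (n - i - 1))" for t
  have "continuous_on {0..b} h"
    unfolding h_def using g0b
    by (intro indefinite_integral_continuous_1' integrable_continuous_real continuous_intros)
  then have "(h \<longlongrightarrow> h 0) (at_right 0)"
    using \<open>0 < b\<close> by (rule continuous_on_Icc_at_rightD)
  moreover have "\<forall>\<^sub>F t in at_right 0. h t = tailint n i \<phi> t"
    unfolding eventually_at_right_field
  proof (intro exI[of _ b] conjI allI impI)
    fix t :: real assume t: "0 < t" "t < b"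
    have "tailint n i \<phi> t = integral {t..b} (\<lambda>s. \<phi> s * s ^ (n - i - 1))"
      using tailint_eq_integral[OF Cb vanish_b] t by simp
    also have "\<dots> = h t"
      unfolding h_def by (rule integral_cong) (use t in \<open>simp add: \<phi>g\<close>)
    finally show "h t = tailint n i \<phi> t" by simp
  qed (use \<open>0 < b\<close> in simp)
  ultimately have "(tailint n i \<phi> \<longlongrightarrow> h 0) (at_right 0)"
    by (rule Lim_transform_eventually)
  moreover have "(weighted n i \<phi> \<longlongrightarrow> 0) (at_right 0)"
  proof (rule Lim_transform_eventually)
    have "(weighted n i g \<longlongrightarrow> weighted n i g 0) (at_right 0)"
      using g0b \<open>0 < b\<close> by (intro continuous_on_Icc_at_rightD continuous_intros)
    then show "(weighted n i g \<longlongrightarrow> 0) (at_right 0)"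
      using \<open>i < n\<close> by (simp add: power_0_left)
    show "\<forall>\<^sub>F t in at_right 0. weighted n i g t = weighted n i \<phi> t"
      using eventually_at_right_less[of "0::real"] by eventually_elim (simp add: \<phi>g)
  qed
  ultimately show ?thesis
    using Cb vanish by (auto simp: DniR_def Dni_def)
qed

definition flatten_at :: "real \<Rightarrow> (real \<Rightarrow> real) \<Rightarrow> real \<Rightarrow> real" where
  "flatten_at \<delta> \<zeta> t = (if t \<le> 0 then 0 else \<zeta> (max t \<delta>))"

lemma flatten_at_DniR:
  assumes "i < n" and \<zeta>: "\<zeta> \<in> DniR n i R" and "0 < \<delta>" "\<delta> \<le> R"
  shows "flatten_at \<delta> \<zeta> \<in> Cc0 \<inter> DniR n i R"
proof -
  have "continuous_on {0<..} \<zeta>" using DniR_Cb[OF \<zeta>] by (simp add: Cb_def)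
  moreover have "continuous_on {0..} (\<lambda>t. max t \<delta>)" by (intro continuous_intros)
  moreover have "(\<lambda>t. max t \<delta>) ` {0..} \<subseteq> {0<..}" using \<open>0 < \<delta>\<close> by auto
  ultimately have "continuous_on {0..} (\<lambda>t. \<zeta> (max t \<delta>))"
    by (rule continuous_on_compose2)
  moreover have "\<forall>t\<ge>R + 1. \<zeta> (max t \<delta>) = 0"
    using DniR_vanish[OF \<zeta>] \<open>\<delta> \<le> R\<close> by simp
  ultimately have "flatten_at \<delta> \<zeta> \<in> Cc0"
    unfolding Cc0_def flatten_at_def by auto
  moreover have "flatten_at \<delta> \<zeta> \<in> DniR n i R"
    using \<open>i < n\<close> \<open>flatten_at \<delta> \<zeta> \<in> Cc0\<close>
  proof (rule Cc0_DniR)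
    show "\<forall>t\<le>0. flatten_at \<delta> \<zeta> t = 0" by (simp add: flatten_at_def)
    show "\<forall>t>R. flatten_at \<delta> \<zeta> t = 0"
      using DniR_vanish[OF \<zeta>] \<open>0 < \<delta>\<close> \<open>\<delta> \<le> R\<close> by (simp add: flatten_at_def)
  qed
  ultimately show ?thesis by simp
qed

lemma scaled_tail_sub_flatten_at:
  assumes "i < n" and \<zeta>: "\<zeta> \<in> Cb" and \<phi>: "flatten_at \<delta> \<zeta> \<in> Cb" and t: "0 < t" "t \<le> \<delta>"
  shows "scaled_tail n i (\<lambda>s. \<zeta> s - flatten_at \<delta> \<zeta> s) t
    = real (n - i) * (tailint n i \<zeta> t - tailint n i \<zeta> \<delta>) - (\<delta> ^ (n - i) - t ^ (n - i)) * \<zeta> \<delta>"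
proof -
  define k where "k = n - i - 1"
  have nik: "n - i = Suc k" using \<open>i < n\<close> by (simp add: k_def)
  have "tailint n i (flatten_at \<delta> \<zeta>) \<delta> = tailint n i \<zeta> \<delta>"
    unfolding tailint_def by (rule integral_cong) (use t in \<open>simp add: flatten_at_def\<close>)
  moreover have "integral {t..\<delta>} (\<lambda>s. flatten_at \<delta> \<zeta> s * s ^ k) = \<zeta> \<delta> * ((\<delta> ^ Suc k - t ^ Suc k) / Suc k)"
  proof -
    have "integral {t..\<delta>} (\<lambda>s. flatten_at \<delta> \<zeta> s * s ^ k) = integral {t..\<delta>} (\<lambda>s. \<zeta> \<delta> * s ^ k)"
      by (rule integral_cong) (use t in \<open>simp add: flatten_at_def\<close>)
    then show ?thesis
      using integral_unique[OF has_integral_power[OF \<open>t \<le> \<delta>\<close>, of k]] by simp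
  qed
  ultimately have "tailint n i (flatten_at \<delta> \<zeta>) t = tailint n i \<zeta> \<delta> + \<zeta> \<delta> * ((\<delta> ^ Suc k - t ^ Suc k) / Suc k)"
    using tailint_split[OF \<phi> t, of n i] by (simp add: k_def)
  then show ?thesis
    unfolding tailint_diff[OF \<zeta> \<phi> \<open>0 < t\<close>] nik by (simp add: field_simps)
qed

lemma abs_terms_sub_flatten_at_le:
  assumes "i < n" and \<zeta>: "\<zeta> \<in> DniR n i R" and \<delta>: "0 < \<delta>" "\<delta> \<le> R" and "0 < t"
    and near0: "\<And>s. 0 < s \<Longrightarrow> s \<le> \<delta> \<Longrightarrow> \<bar>tailint n i \<zeta> s - L\<bar> \<le> \<eta> \<and> \<bar>weighted n i \<zeta> s\<bar> \<le> \<eta>"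
  shows "\<bar>scaled_tail n i (\<lambda>s. \<zeta> s - flatten_at \<delta> \<zeta> s) t\<bar> \<le> (2 * real (n - i) + 1) * \<eta>"
    and "\<bar>weighted n i (\<lambda>s. \<zeta> s - flatten_at \<delta> \<zeta> s) t\<bar> \<le> 2 * \<eta>"
proof -
  have \<phi>: "flatten_at \<delta> \<zeta> \<in> DniR n i R" using flatten_at_DniR[OF \<open>i < n\<close> \<zeta> \<delta>] by simp
  have "0 \<le> \<eta>" using near0[OF \<delta>(1) order_refl] by linarith
  have "\<bar>scaled_tail n i (\<lambda>s. \<zeta> s - flatten_at \<delta> \<zeta> s) t\<bar> \<le> (2 * real (n - i) + 1) * \<eta>
    \<and> \<bar>weighted n i (\<lambda>s. \<zeta> s - flatten_at \<delta> \<zeta> s) t\<bar> \<le> 2 * \<eta>"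
  proof (cases "t \<le> \<delta>")
    case True
    have "t ^ (n - i) \<le> \<delta> ^ (n - i)" using True \<open>0 < t\<close> by (simp add: power_mono)
    have small: "\<bar>c * \<zeta> \<delta>\<bar> \<le> \<eta>" if "0 \<le> c" "c \<le> \<delta> ^ (n - i)" for c
      using near0[OF \<delta>(1) order_refl] that
      by (auto simp: abs_mult intro: order_trans[OF mult_right_mono[of c "\<delta> ^ (n - i)"]])
    have "\<bar>tailint n i \<zeta> t - tailint n i \<zeta> \<delta>\<bar> \<le> 2 * \<eta>"
      using near0[OF \<open>0 < t\<close> True] near0[OF \<delta>(1) order_refl] by arith
    then have "\<bar>real (n - i) * (tailint n i \<zeta> t - tailint n i \<zeta> \<delta>)\<bar> \<le> real (n - i) * (2 * \<eta>)"
      by (simp add: abs_mult mult_left_mono)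
    then have "\<bar>scaled_tail n i (\<lambda>s. \<zeta> s - flatten_at \<delta> \<zeta> s) t\<bar> \<le> real (n - i) * (2 * \<eta>) + \<eta>"
      unfolding scaled_tail_sub_flatten_at[OF \<open>i < n\<close> DniR_Cb[OF \<zeta>] DniR_Cb[OF \<phi>] \<open>0 < t\<close> True]
      using small[of "\<delta> ^ (n - i) - t ^ (n - i)"] \<open>t ^ (n - i) \<le> \<delta> ^ (n - i)\<close> \<open>0 < t\<close>
      by (smt (verit) abs_triangle_ineq4 zero_le_power)
    moreover have "weighted n i (\<lambda>s. \<zeta> s - flatten_at \<delta> \<zeta> s) t = weighted n i \<zeta> t - t ^ (n - i) * \<zeta> \<delta>"
      using \<open>0 < t\<close> True by (simp add: flatten_at_def max_absorb2 right_diff_distrib)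
    then have "\<bar>weighted n i (\<lambda>s. \<zeta> s - flatten_at \<delta> \<zeta> s) t\<bar> \<le> 2 * \<eta>"
      using near0[OF \<open>0 < t\<close> True] small[of "t ^ (n - i)"] \<open>t ^ (n - i) \<le> \<delta> ^ (n - i)\<close> \<open>0 < t\<close>
      by (smt (verit) zero_le_power)
    ultimately show ?thesis by (simp add: algebra_simps)
  next
    case False
    then have "\<zeta> s - flatten_at \<delta> \<zeta> s = 0" if "t \<le> s" for s
      using that \<open>0 < t\<close> by (simp add: flatten_at_def)
    then show ?thesis
      using \<open>0 \<le> \<eta>\<close> \<open>i < n\<close> by (simp add: tailint_eq_0)
  qed
  then show "\<bar>scaled_tail n i (\<lambda>s. \<zeta> s - flatten_at \<delta> \<zeta> s) t\<bar> \<le> (2 * real (n - i) + 1) * \<eta>"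
    and "\<bar>weighted n i (\<lambda>s. \<zeta> s - flatten_at \<delta> \<zeta> s) t\<bar> \<le> 2 * \<eta>"
    by simp_all
qed

lemma DniR_dense:
  assumes "i < n" and "0 < R" and \<zeta>: "\<zeta> \<in> DniR n i R" and "0 < e"
  shows "\<exists>\<phi>\<in>Cc0 \<inter> DniR n i R. dnorm n i (\<lambda>t. \<zeta> t - \<phi> t) < e"
proof -
  obtain L where L: "(tailint n i \<zeta> \<longlongrightarrow> L) (at_right 0)" using \<zeta> by (auto simp: DniR_def Dni_def)
  define \<eta> where "\<eta> = e / (4 * real (n - i) + 5)"
  have "0 < \<eta>" using \<open>0 < e\<close> by (simp add: \<eta>_def)
  have "\<forall>\<^sub>F t in at_right 0. dist (tailint n i \<zeta> t) L < \<eta> \<and> dist (weighted n i \<zeta> t) 0 < \<eta>"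
    using \<zeta> \<open>0 < \<eta>\<close> by (intro eventually_conj tendstoD L) (simp_all add: DniR_def Dni_def)
  then obtain d where "0 < d"
    and d: "\<And>t. 0 < t \<Longrightarrow> t < d \<Longrightarrow> \<bar>tailint n i \<zeta> t - L\<bar> < \<eta> \<and> \<bar>weighted n i \<zeta> t\<bar> < \<eta>"
    by (auto simp: eventually_at_right_field dist_real_def)
  define \<delta> where "\<delta> = min (d / 2) R"
  have \<delta>: "0 < \<delta>" "\<delta> \<le> R" and "\<delta> < d" using \<open>0 < d\<close> \<open>0 < R\<close> by (auto simp: \<delta>_def)
  have near0: "\<bar>tailint n i \<zeta> s - L\<bar> \<le> \<eta> \<and> \<bar>weighted n i \<zeta> s\<bar> \<le> \<eta>" if "0 < s" "s \<le> \<delta>" for s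
    using d[of s] that \<open>\<delta> < d\<close> by auto
  have \<phi>: "flatten_at \<delta> \<zeta> \<in> Cc0 \<inter> DniR n i R"
    by (rule flatten_at_DniR[OF \<open>i < n\<close> \<zeta> \<delta>])
  note bounds = abs_terms_sub_flatten_at_le[OF \<open>i < n\<close> \<zeta> \<delta> _ near0]
  have "dnorm n i (\<lambda>t. \<zeta> t - flatten_at \<delta> \<zeta> t)
      \<le> 2 * sup_pos (scaled_tail n i (\<lambda>t. \<zeta> t - flatten_at \<delta> \<zeta> t))
        + sup_pos (weighted n i (\<lambda>t. \<zeta> t - flatten_at \<delta> \<zeta> t))"
    using \<phi> dnorm_le[OF DniR_diff[OF \<zeta>]] by blast
  also have "\<dots> \<le> 2 * ((2 * real (n - i) + 1) * \<eta>) + 2 * \<eta>"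
    using bounds by (intro add_mono mult_left_mono sup_pos_least) auto
  also have "\<dots> < (4 * real (n - i) + 5) * \<eta>"
    using \<open>0 < \<eta>\<close> by (simp add: algebra_simps)
  also have "\<dots> = e"
    by (simp add: \<eta>_def)
  finally show ?thesis using \<phi> by blast
qed

theorem lemma2p7:
  fixes n i :: nat and R :: real
  assumes "n \<ge> 2" and "1 \<le> i" and "i \<le> n - 1" and "R > 0"
  shows
    \<comment> \<open>D is a real vector space\<close>
    "(\<lambda>t. 0) \<in> DniR n i R
     \<and> (\<forall>f\<in>DniR n i R. \<forall>g\<in>DniR n i R. (\<lambda>t. f t + g t) \<in> DniR n i R)
     \<and> (\<forall>f\<in>DniR n i R. \<forall>c::real. (\<lambda>t. c * f t) \<in> DniR n i R)
     \<comment> \<open>dnorm is a norm on it\<close>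
     \<and> (\<forall>f\<in>DniR n i R. 0 \<le> dnorm n i f \<and> (dnorm n i f = 0 \<longleftrightarrow> f = (\<lambda>t. 0)))
     \<and> (\<forall>f\<in>DniR n i R. \<forall>c::real. dnorm n i (\<lambda>t. c * f t) = \<bar>c\<bar> * dnorm n i f)
     \<and> (\<forall>f\<in>DniR n i R. \<forall>g\<in>DniR n i R.
          dnorm n i (\<lambda>t. f t + g t) \<le> dnorm n i f + dnorm n i g)
     \<comment> \<open>completeness\<close>
     \<and> (\<forall>X :: nat \<Rightarrow> real \<Rightarrow> real. (\<forall>k. X k \<in> DniR n i R) \<longrightarrow>
          (\<forall>e>0. \<exists>N. \<forall>m\<ge>N. \<forall>k\<ge>N. dnorm n i (\<lambda>t. X m t - X k t) < e) \<longrightarrow>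
          (\<exists>\<zeta>\<in>DniR n i R. (\<lambda>k. dnorm n i (\<lambda>t. X k t - \<zeta> t)) \<longlonglongrightarrow> 0))
     \<comment> \<open>density of C_c([0,infinity)) \<inter> D, i.e. D is its completion\<close>
     \<and> (\<forall>\<zeta>\<in>DniR n i R. \<forall>e>0. \<exists>\<phi>\<in>Cc0 \<inter> DniR n i R. dnorm n i (\<lambda>t. \<zeta> t - \<phi> t) < e)"
proof -
  from assms have "i < n" by linarith
  have norm: "\<forall>f\<in>DniR n i R. 0 \<le> dnorm n i f \<and> (dnorm n i f = 0 \<longleftrightarrow> f = (\<lambda>t. 0))"
    using dnorm_nonneg dnorm_eq_0_iff by blast
  have complete: "\<forall>X :: nat \<Rightarrow> real \<Rightarrow> real. (\<forall>k. X k \<in> DniR n i R) \<longrightarrow>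
      (\<forall>e>0. \<exists>N. \<forall>m\<ge>N. \<forall>k\<ge>N. dnorm n i (\<lambda>t. X m t - X k t) < e) \<longrightarrow>
      (\<exists>\<zeta>\<in>DniR n i R. (\<lambda>k. dnorm n i (\<lambda>t. X k t - \<zeta> t)) \<longlonglongrightarrow> 0)"
    using DniR_complete[OF \<open>i < n\<close>] by blast
  have dense: "\<forall>\<zeta>\<in>DniR n i R. \<forall>e>0. \<exists>\<phi>\<in>Cc0 \<inter> DniR n i R. dnorm n i (\<lambda>t. \<zeta> t - \<phi> t) < e"
    using DniR_dense[OF \<open>i < n\<close> \<open>0 < R\<close>] by blast
  have "\<forall>f\<in>DniR n i R. \<forall>g\<in>DniR n i R. (\<lambda>t. f t + g t) \<in> DniR n i R"
    and "\<forall>f\<in>DniR n i R. \<forall>c::real. (\<lambda>t. c * f t) \<in> DniR n i R"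
    and "\<forall>f\<in>DniR n i R. \<forall>c::real. dnorm n i (\<lambda>t. c * f t) = \<bar>c\<bar> * dnorm n i f"
    and "\<forall>f\<in>DniR n i R. \<forall>g\<in>DniR n i R. dnorm n i (\<lambda>t. f t + g t) \<le> dnorm n i f + dnorm n i g"
    using DniR_add DniR_scale dnorm_scale dnorm_triangle by blast+
  then show ?thesis
    using DniR_zero norm complete dense by (intro conjI) assumption+
qed

end
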